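(* For every formula $A$ of $\mathsf{LTL}^{\ll}$, every model $\sigma$ and every $i \in \mathbb{N}$: $\sigma, i \models \top \sim A$ if and only if $\sigma, i \models \Diamond\Box A$. That is, the formula $\top \sim A$ is equivalent to the formula $\Diamond \Box A$.
   Context: Fix a set $\mathsf{Prop}$ of atomic propositions. Formulas of $\mathsf{LTL}^{\ll}$ are built from atomic propositions $P \in \mathsf{Prop}$ by $\lnot A$, $A \land B$, $\mathsf{X} A$, $A \mathbin{\mathsf{U}} B$ and $A \ll B$; $\lor$ is defined from $\lnot,\land$ as usual. Set $\top := P \lor \lnot P$ for a fixed $P \in \mathsf{Prop}$, $\Diamond B := \top \mathbin{\mathsf{U}} B$, $\Box B := \lnot \Diamond \lnot B$, and $A \sim B := \lnot(A \ll B) \land \lnot(B \ll A)$. A model $\sigma$ is an $\omega$-word $\sigma_0\sigma_1\sigma_2\ldots$ over the alphabet $2^{\mathsf{Prop}}$. Satisfaction is defined by: $\sigma,i \models P$ iff $P \in \sigma_i$; $\sigma,i\models \lnot A$ iff not $\sigma,i\models A$; $\sigma,i\models A\land B$ iff both hold; $\sigma,i\models \mathsf{X}A$ iff $\sigma,i+1\models A$; $\sigma,i\models A\mathbin{\mathsf{U}}B$ iff there is $j\ge i$ with $\sigma,j\models B$ and $\sigma,k\models A$ for all $i\le k<j$; $\sigma,i\models A\ll B$ iff for every $b$ there exists $j$ with $\mathrm{card}(A_\sigma^{i,j}) + b \le \mathrm{card}(B_\sigma^{i,j})$, where $A_\sigma^{i,j} := \{k \in \mathbb{N} : i \le k \le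 j,\ \sigma,k\models A\}$ (quantifiers over $b$ and $j$ range over natural numbers). *)

theory Defs
  imports Main
begin

datatype 'p ltl =
    Prop 'p
  | Not "'p ltl"
  | And "'p ltl" "'p ltl"
  | Next "'p ltl"
  | Until "'p ltl" "'p ltl"
  | Less "'p ltl" "'p ltl"

type_synonym 'p model = "nat \<Rightarrow> 'p set"

fun sat :: "'p model \<Rightarrow> nat \<Rightarrow> 'p ltl \<Rightarrow> bool" where
  "sat \<sigma> i (Prop P) = (P \<in> \<sigma> i)"
| "sat \<sigma> i (Not A) = (\<not> sat \<sigma> i A)"
| "sat \<sigma> i (And A B) = (sat \<sigma> i A \<and> sat \<sigma> i B)"
| "sat \<sigma> i (Next A) = sat \<sigma> (Suc i) A"
| "sat \<sigma> i (Until A B) = (\<exists>j\<ge>i. sat \<sigma> j B \<and> (\<forall>k. i \<le> k \<and> k < j \<longrightarrow> sat \<sigma> k A))"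
| "sat \<sigma> i (Less A B) = (\<forall>b::nat. \<exists>j::nat.
      card {k. i \<le> k \<and> k \<le> j \<and> sat \<sigma> k A} + b \<le> card {k. i \<le> k \<and> k \<le> j \<and> sat \<sigma> k B})"

definition Or :: "'p ltl \<Rightarrow> 'p ltl \<Rightarrow> 'p ltl" where
  "Or A B = Not (And (Not A) (Not B))"

definition Top :: "'p \<Rightarrow> 'p ltl" where
  "Top P = Or (Prop P) (Not (Prop P))"

definition Diamond :: "'p \<Rightarrow> 'p ltl \<Rightarrow> 'p ltl" where
  "Diamond P B = Until (Top P) B"

definition Box :: "'p \<Rightarrow> 'p ltl \<Rightarrow> 'p ltl" where
  "Box P B = Not (Diamond P (Not B))"

definition Sim :: "'p ltl \<Rightarrow> 'p ltl \<Rightarrow> 'p ltl" where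
  "Sim A B = And (Not (Less A B)) (Not (Less B A))"

end

theory Submission
  imports Defs
begin

text \<open>Since \<open>\<top>\<close> holds everywhere, \<open>\<top> \<lless> A\<close> is impossible, and \<open>A \<lless> \<top>\<close>
  says that the number of positions in \<open>[i, j]\<close> falsifying \<open>A\<close> grows without bound,
  i.e. that \<open>A\<close> fails infinitely often from \<open>i\<close> on. So \<open>\<top> \<sim> A\<close> holds iff \<open>A\<close> fails
  only finitely often from \<open>i\<close> on, which is exactly \<open>\<diamond>\<box>A\<close>.\<close>

lemma infinite_iff_card_le_unbounded:
  fixes S :: "nat set"
  shows "infinite S \<longleftrightarrow> (\<forall>b. \<exists>j. b \<le> card {k \<in> S. k \<le> j})"
proof
  assume "infinite S"
  show "\<forall>b. \<exists>j. b \<le> card {k \<in> S. k \<le> j}"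
  proof
    fix b
    obtain T where T: "T \<subseteq> S" "finite T" "card T = b"
      using infinite_arbitrarily_large[OF \<open>infinite S\<close>] by blast
    obtain M where "\<forall>k\<in>T. k \<le> M"
      using T(2) finite_nat_set_iff_bounded_le by blast
    then have "T \<subseteq> {k \<in> S. k \<le> M}"
      using T(1) by blast
    moreover have "finite {k \<in> S. k \<le> M}"
      by (rule finite_subset[of _ "{..M}"]) auto
    ultimately have "b \<le> card {k \<in> S. k \<le> M}"
      using T(3) card_mono by blast
    then show "\<exists>j. b \<le> card {k \<in> S. k \<le> j}" ..
  qed
next
  assume unbounded: "\<forall>b. \<exists>j. b \<le> card {k \<in> S. k \<le> j}"
  show "infinite S"
  proof
    assume "finite S"
    obtain j where "Suc (card S) \<le> card {k \<in> S. k \<le> j}"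
      using unbounded by blast
    moreover have "card {k \<in> S. k \<le> j} \<le> card S"
      using \<open>finite S\<close> by (intro card_mono) auto
    ultimately show False by simp
  qed
qed

lemma finite_iff_eventually_always:
  fixes i :: nat
  shows "finite {k. i \<le> k \<and> \<not> Q k} \<longleftrightarrow> (\<exists>j\<ge>i. \<forall>m\<ge>j. Q m)"
proof -
  have "finite {k. i \<le> k \<and> \<not> Q k} \<longleftrightarrow> eventually (\<lambda>k. i \<le> k \<longrightarrow> Q k) sequentially"
    unfolding cofinite_eq_sequentially[symmetric] eventually_cofinite by simp
  also have "\<dots> \<longleftrightarrow> (\<exists>j\<ge>i. \<forall>m\<ge>j. Q m)"
    unfolding eventually_sequentially
  proof
    assume "\<exists>N. \<forall>n\<ge>N. i \<le> n \<longrightarrow> Q n"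
    then obtain N where "\<forall>n\<ge>N. i \<le> n \<longrightarrow> Q n" ..
    then show "\<exists>j\<ge>i. \<forall>m\<ge>j. Q m"
      by (intro exI[of _ "max i N"]) auto
  qed auto
  finally show ?thesis .
qed

lemma card_interval_partition:
  fixes i j :: nat
  shows "card {k. i \<le> k \<and> k \<le> j \<and> Q k} + card {k. i \<le> k \<and> k \<le> j \<and> \<not> Q k}
    = card {k. i \<le> k \<and> k \<le> j}"
proof -
  have "{k. i \<le> k \<and> k \<le> j} = {k. i \<le> k \<and> k \<le> j \<and> Q k} \<union> {k. i \<le> k \<and> k \<le> j \<and> \<not> Q k}"
    by auto
  then show ?thesis
    by (simp only:) (rule card_Un_disjoint[symmetric]; auto intro: finite_subset[of _ "{..j}"])
qed

lemma sat_Top [simp]: "sat \<sigma> i (Top P)"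
  by (simp add: Top_def Or_def)

lemma sat_Diamond: "sat \<sigma> i (Diamond P B) \<longleftrightarrow> (\<exists>j\<ge>i. sat \<sigma> j B)"
  by (simp add: Diamond_def)

lemma sat_Box: "sat \<sigma> i (Box P B) \<longleftrightarrow> (\<forall>j\<ge>i. sat \<sigma> j B)"
  by (simp add: Box_def sat_Diamond)

lemma not_sat_Less_if_implied:
  assumes "\<And>k. sat \<sigma> k B \<Longrightarrow> sat \<sigma> k A"
  shows "\<not> sat \<sigma> i (Less A B)"
proof
  assume "sat \<sigma> i (Less A B)"
  then obtain j where j:
    "card {k. i \<le> k \<and> k \<le> j \<and> sat \<sigma> k A} + 1 \<le> card {k. i \<le> k \<and> k \<le> j \<and> sat \<sigma> k B}"
    unfolding sat.simps by blast
  have "card {k. i \<le> k \<and> k \<le> j \<and> sat \<sigma> k B} \<le> card {k. i \<le> k \<and> k \<le> j \<and> sat \<sigma> k A}"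
    using assms by (intro card_mono) (auto intro: finite_subset[of _ "{..j}"])
  with j show False by simp
qed

lemma sat_Less_Top_iff:
  "sat \<sigma> i (Less A (Top P)) \<longleftrightarrow> infinite {k. i \<le> k \<and> \<not> sat \<sigma> k A}"
proof -
  have "card {k. i \<le> k \<and> k \<le> j \<and> sat \<sigma> k A} + b \<le> card {k. i \<le> k \<and> k \<le> j}
      \<longleftrightarrow> b \<le> card {k \<in> {k. i \<le> k \<and> \<not> sat \<sigma> k A}. k \<le> j}" for b j
  proof -
    have "{k \<in> {k. i \<le> k \<and> \<not> sat \<sigma> k A}. k \<le> j} = {k. i \<le> k \<and> k \<le> j \<and> \<not> sat \<sigma> k A}"
      by auto
    then show ?thesis
      by (simp only: card_interval_partition[of i j "\<lambda>k. sat \<sigma> k A", symmetric]) simp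
  qed
  then show ?thesis
    by (simp add: infinite_iff_card_le_unbounded)
qed

theorem mainTheorem1:
  fixes P :: 'p and A :: "'p ltl" and \<sigma> :: "'p model" and i :: nat
  shows "sat \<sigma> i (Sim (Top P) A) \<longleftrightarrow> sat \<sigma> i (Diamond P (Box P A))"
proof -
  have "\<not> sat \<sigma> i (Less (Top P) A)"
    by (rule not_sat_Less_if_implied) simp
  then have "sat \<sigma> i (Sim (Top P) A) \<longleftrightarrow> \<not> sat \<sigma> i (Less A (Top P))"
    unfolding Sim_def sat.simps(2,3) by blast
  also have "\<dots> \<longleftrightarrow> finite {k. i \<le> k \<and> \<not> sat \<sigma> k A}"
    unfolding sat_Less_Top_iff by simp
  also have "\<dots> \<longleftrightarrow> sat \<sigma> i (Diamond P (Box P A))"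
    by (simp add: sat_Diamond sat_Box finite_iff_eventually_always)
  finally show ?thesis .
qed

end
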